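(* Consider the two-phase, two-camp opinion game described in the context, with phase-independent camp weights $w_{ig}, w_{ib}$. Let $\mathbf{r}=(\mathbf{I}-\mathbf{w}^T)^{-1}\mathbf{1}$ and $\mathbf{s}=(\mathbf{I}-\mathbf{w}^T)^{-1}(\mathbf{r}\circ\mathbf{w^0})$. Then the good camp's utility is $$\sum_i v_i^{(2)}=\sum_i s_i w_{ii}^0 v_i^0+\sum_i s_i w_{ig}x_i^{(1)}-\sum_i s_i w_{ib}y_i^{(1)}+\sum_i r_i w_{ig}x_i^{(2)}-\sum_i r_i w_{ib}y_i^{(2)},$$ and the following is an optimal strategy for the good camp regardless of the bad camp's strategy (and symmetrically for the bad camp, with $w_{ib}$ in place of $w_{ig}$ and $k_b$ in place of $k_g$), so that the profile of these strategies is a Nash equilibrium: let $M=\max_i \max\{s_i w_{ig}, r_i w_{ig}\}$. If $M\le 0$, invest nothing. If $M>0$, invest the entire budget $k_g$ on a node $i$ attaining $M$; if $\max_i s_i w_{ig}>\max_j r_j w_{jg}$ the whole budget is invested in the first phase (on a maximizer of $s_i w_{ig}$), if $\max_i s_i w_{ig}<\max_j r_j w_{jg}$ the whole budget is invested in the second phase (on a maximizer of $r_j w_{jg}$), and if they are equal either phase is optimal.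
   Context: A social network has node set $N$, $|N|=n$, and a real $n\times n$ matrix $\mathbf{w}=(w_{ij})$ of influence weights with $\sum_j |w_{ij}|<1$ for every $i$ (so $\mathbf{I}-\mathbf{w}$ is invertible). Each node $i$ has an initial opinion $v_i^0$, a weight $w_{ii}^0$ on its initial bias, and weights $w_{ig}, w_{ib}$ attributed to the good and bad camps; with $|w_{ii}^0|+\sum_j|w_{ij}|+|w_{ig}|+|w_{ib}|\le 1$. Vectors $\mathbf{w^0},\mathbf{w_g},\mathbf{w_b}$ collect these; $\circ$ is the entrywise (Hadamard) product and $\mathbf{1}$ the all-ones vector. The good camp chooses nonnegative vectors $\mathbf{x^{(1)}},\mathbf{x^{(2)}}$ with $\sum_i (x_i^{(1)}+x_i^{(2)})\le k_g$, the bad camp nonnegative $\mathbf{y^{(1)}},\mathbf{y^{(2)}}$ with $\sum_i (y_i^{(1)}+y_i^{(2)})\le k_b$ ($k_g,k_b\ge 0$). Opinions evolve by $\mathbf{v^{(0)}}=\mathbf{v^0}$ and, for phases $p=1,2$, $\mathbf{v^{(p)}}=(\mathbf{I}-\mathbf{w})^{-1}(\mathbf{w^0}\circ\mathbf{v^{(p-1)}}+\mathbf{w_g}\circ\mathbf{x^{(p)}}-\mathbf{w_b}\circ\mathbf{y^{(p)}})$. The game is zero-sum: the good camp's utility is $\sum_i v_i^{(2)}$ and the bad camp's is $-\sum_i v_i^{(2)}$. *)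

theory Defs
  imports "HOL-Analysis.Analysis"
begin

definition had :: "real^'n \<Rightarrow> real^'n \<Rightarrow> real^'n" where
  "had x y = (\<chi> i. x $ i * y $ i)"

definition phase_step ::
  "real^'n^'n \<Rightarrow> real^'n \<Rightarrow> real^'n \<Rightarrow> real^'n \<Rightarrow> real^'n \<Rightarrow> real^'n \<Rightarrow> real^'n \<Rightarrow> real^'n" where
  "phase_step w w0 wg wb v x y =
     matrix_inv (mat 1 - w) *v (had w0 v + had wg x - had wb y)"

definition opinion2 ::
  "real^'n^'n \<Rightarrow> real^'n \<Rightarrow> real^'n \<Rightarrow> real^'n \<Rightarrow> real^'n
   \<Rightarrow> real^'n \<Rightarrow> real^'n \<Rightarrow> real^'n \<Rightarrow> real^'n \<Rightarrow> real^'n" where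
  "opinion2 w w0 wg wb v0 x1 x2 y1 y2 =
     phase_step w w0 wg wb (phase_step w w0 wg wb v0 x1 y1) x2 y2"

text \<open>Good camp's utility: sum of final opinions (bad camp's is its negation).\<close>
definition utility ::
  "real^'n^'n \<Rightarrow> real^'n \<Rightarrow> real^'n \<Rightarrow> real^'n \<Rightarrow> real^'n
   \<Rightarrow> real^'n \<Rightarrow> real^'n \<Rightarrow> real^'n \<Rightarrow> real^'n \<Rightarrow> real" where
  "utility w w0 wg wb v0 x1 x2 y1 y2 = (\<Sum>i\<in>UNIV. opinion2 w w0 wg wb v0 x1 x2 y1 y2 $ i)"

definition rvec :: "real^'n^'n \<Rightarrow> real^'n" where
  "rvec w = matrix_inv (mat 1 - transpose w) *v vec 1"

definition svec :: "real^'n^'n \<Rightarrow> real^'n \<Rightarrow> real^'n" where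
  "svec w w0 = matrix_inv (mat 1 - transpose w) *v had (rvec w) w0"

definition feasible :: "real \<Rightarrow> real^'n \<Rightarrow> real^'n \<Rightarrow> bool" where
  "feasible k x1 x2 \<longleftrightarrow>
     (\<forall>i. 0 \<le> x1 $ i \<and> 0 \<le> x2 $ i) \<and> (\<Sum>i\<in>UNIV. x1 $ i + x2 $ i) \<le> k"

definition opt_strategy ::
  "real^'n \<Rightarrow> real^'n \<Rightarrow> real^'n \<Rightarrow> real \<Rightarrow> real^'n \<Rightarrow> real^'n \<Rightarrow> bool" where
  "opt_strategy s r c k x1 x2 \<longleftrightarrow>
     (let A = Max (range (\<lambda>i. s $ i * c $ i));
          B = Max (range (\<lambda>i. r $ i * c $ i));
          M = max A B
      in (M \<le> 0 \<longrightarrow> x1 = 0 \<and> x2 = 0) \<and>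
         (0 < M \<longrightarrow>
            (B \<le> A \<and> (\<exists>i. s $ i * c $ i = A \<and> x1 = axis i k \<and> x2 = 0)) \<or>
            (A \<le> B \<and> (\<exists>j. r $ j * c $ j = B \<and> x1 = 0 \<and> x2 = axis j k))))"

end

theory Submission
  imports Defs
begin

(* The opinion dynamics are linear, so the total final opinion 1 . v2 is a linear
   functional of the inputs.  Moving the resolvent (I - w)^-1 across the inner product
   turns it into (I - w^T)^-1: phase-2 investments are weighted by r, while phase-1
   investments pass through one more phase, damped by w0, and are weighted by s.  The
   utility therefore splits into a term in (x1, x2) only and a term in (y1, y2) only, so
   each camp faces a linear program over its budget, independently of the other camp.
   Its optimum puts the whole budget on the largest coefficient s_i w_ig or r_i w_ig
   (for the good camp), or invests nothing when no coefficient is positive. *)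

lemma matrix_inv_unique:
  fixes A :: "'a::semiring_1^'n^'m"
  assumes "A ** B = mat 1" and "B ** A = mat 1"
  shows "matrix_inv A = B"
proof -
  have left_inverse: "matrix_inv A ** A = mat 1"
    using someI[of "\<lambda>A'. A ** A' = mat 1 \<and> A' ** A = mat 1" B] assms
    unfolding matrix_inv_def by blast
  have "matrix_inv A = matrix_inv A ** (A ** B)"
    by (simp add: assms(1))
  also have "\<dots> = B"
    by (simp add: matrix_mul_assoc left_inverse)
  finally show ?thesis .
qed

lemma matrix_inv_transpose:
  fixes A :: "'a::comm_semiring_1^'n^'n"
  assumes "invertible A"
  shows "matrix_inv (transpose A) = transpose (matrix_inv A)"
proof (rule matrix_inv_unique)
  have "A ** matrix_inv A = mat 1 \<and> matrix_inv A ** A = mat 1"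
    using assms unfolding invertible_def matrix_inv_def by (rule someI_ex)
  then show "transpose A ** transpose (matrix_inv A) = mat 1"
    and "transpose (matrix_inv A) ** transpose A = mat 1"
    by (metis matrix_transpose_mul transpose_mat)+
qed

lemma inner_matrix_inv_transpose:
  fixes A :: "real^'n^'n"
  assumes "invertible A"
  shows "inner c (matrix_inv A *v u) = inner (matrix_inv (transpose A) *v c) u"
  by (simp add: matrix_inv_transpose[OF assms] dot_lmul_matrix)

lemma transpose_diff: "transpose (A - B) = transpose A - transpose (B :: 'a::ab_group_add^'n^'m)"
  by (simp add: transpose_def vec_eq_iff)

lemma inner_had: "inner a (had b c) = (\<Sum>i\<in>UNIV. a $ i * b $ i * c $ i)"
  by (simp add: inner_vec_def had_def mult.assoc)

lemma inner_had_assoc: "inner a (had b c) = inner (had a b) c"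
  by (simp add: inner_had) (simp add: inner_vec_def had_def)

lemma invertible_mat_1_minus_row_sum_lt_1:
  fixes w :: "real^'n^'n"
  assumes row: "\<And>i. (\<Sum>j\<in>UNIV. \<bar>w $ i $ j\<bar>) < 1"
  shows "invertible (mat 1 - w)"
proof -
  have "x = 0" if "(mat 1 - w) *v x = 0" for x :: "real^'n"
  proof -
    have fixed_point: "x = w *v x"
      using that by (simp add: matrix_vector_mult_diff_rdistrib)
    obtain i where max: "\<And>j. \<bar>x $ j\<bar> \<le> \<bar>x $ i\<bar>"
    proof -
      have "Max (range (\<lambda>j. \<bar>x $ j\<bar>)) \<in> range (\<lambda>j. \<bar>x $ j\<bar>)"
        by (rule Max_in) auto
      then obtain i where "\<bar>x $ i\<bar> = Max (range (\<lambda>j. \<bar>x $ j\<bar>))"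
        by (metis rangeE)
      then show ?thesis
        by (intro that[of i]) simp
    qed
    have "\<bar>x $ i\<bar> = \<bar>\<Sum>j\<in>UNIV. w $ i $ j * x $ j\<bar>"
      by (subst fixed_point) (simp add: matrix_vector_mult_def)
    also have "\<dots> \<le> (\<Sum>j\<in>UNIV. \<bar>w $ i $ j\<bar> * \<bar>x $ i\<bar>)"
      by (rule order_trans[OF sum_abs sum_mono]) (simp add: abs_mult max mult_left_mono)
    also have "\<dots> = (\<Sum>j\<in>UNIV. \<bar>w $ i $ j\<bar>) * \<bar>x $ i\<bar>"
      by (simp add: sum_distrib_right)
    finally have "\<bar>x $ i\<bar> = 0"
      using row[of i] by (simp add: mult_le_cancel_right1)
    then show ?thesis
      using max by (simp add: vec_eq_iff)
  qed
  then show ?thesis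
    using invertible_left_inverse matrix_left_invertible_ker by blast
qed

definition camp_gain :: "real^'n \<Rightarrow> real^'n \<Rightarrow> real^'n \<Rightarrow> real^'n \<Rightarrow> real^'n \<Rightarrow> real" where
  "camp_gain s r c x1 x2 = (\<Sum>i\<in>UNIV. s $ i * c $ i * x1 $ i) + (\<Sum>i\<in>UNIV. r $ i * c $ i * x2 $ i)"

lemma utility_eq_camp_gain:
  fixes w :: "real^'n^'n"
  assumes "invertible (mat 1 - w)"
  shows "utility w w0 wg wb v0 x1 x2 y1 y2 =
           (\<Sum>i\<in>UNIV. svec w w0 $ i * w0 $ i * v0 $ i)
         + camp_gain (svec w w0) (rvec w) wg x1 x2 - camp_gain (svec w w0) (rvec w) wb y1 y2"
proof -
  have adjoint: "inner c (matrix_inv (mat 1 - w) *v u) = inner (matrix_inv (mat 1 - transpose w) *v c) u"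
    for c u :: "real^'n"
    using inner_matrix_inv_transpose[OF assms] by (simp add: transpose_diff)
  define v1 where "v1 = phase_step w w0 wg wb v0 x1 y1"
  have "utility w w0 wg wb v0 x1 x2 y1 y2 = inner (vec 1) (phase_step w w0 wg wb v1 x2 y2)"
    by (simp add: utility_def opinion2_def v1_def inner_vec_def)
  also have "\<dots> = inner (rvec w) (had w0 v1 + had wg x2 - had wb y2)"
    by (simp add: phase_step_def adjoint rvec_def)
  also have "\<dots> = inner (had (rvec w) w0) v1 + inner (rvec w) (had wg x2) - inner (rvec w) (had wb y2)"
    by (simp add: inner_add_right inner_diff_right inner_had_assoc[of "rvec w" w0])
  also have "inner (had (rvec w) w0) v1 = inner (svec w w0) (had w0 v0 + had wg x1 - had wb y1)"
    by (simp add: v1_def phase_step_def adjoint svec_def)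
  finally show ?thesis
    by (simp add: inner_add_right inner_diff_right inner_had camp_gain_def)
qed

definition best_rate :: "real^'n \<Rightarrow> real^'n \<Rightarrow> real^'n \<Rightarrow> real" where
  "best_rate s r c = max (Max (range (\<lambda>i. s $ i * c $ i))) (Max (range (\<lambda>i. r $ i * c $ i)))"

lemma rate_le_best_rate:
  shows "s $ i * c $ i \<le> best_rate s r c" and "r $ i * c $ i \<le> best_rate s r c"
  unfolding best_rate_def by (simp_all add: max.coboundedI1 max.coboundedI2)

lemma camp_gain_le_best_rate:
  assumes "feasible k x1 x2"
  shows "camp_gain s r c x1 x2 \<le> max (best_rate s r c) 0 * k"
proof -
  let ?M = "max (best_rate s r c) 0"
  have nonneg: "0 \<le> x1 $ i" "0 \<le> x2 $ i" for i
    using assms by (auto simp: feasible_def)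
  have rates: "s $ i * c $ i \<le> ?M" "r $ i * c $ i \<le> ?M" for i
    by (simp_all add: le_max_iff_disj rate_le_best_rate)
  have "camp_gain s r c x1 x2 = (\<Sum>i\<in>UNIV. s $ i * c $ i * x1 $ i + r $ i * c $ i * x2 $ i)"
    by (simp add: camp_gain_def sum.distrib)
  also have "\<dots> \<le> (\<Sum>i\<in>UNIV. ?M * (x1 $ i + x2 $ i))"
    by (intro sum_mono) (simp add: distrib_left add_mono mult_right_mono nonneg rates)
  also have "\<dots> = ?M * (\<Sum>i\<in>UNIV. x1 $ i + x2 $ i)"
    by (simp add: sum_distrib_left)
  also have "\<dots> \<le> ?M * k"
    using assms by (intro mult_left_mono) (auto simp: feasible_def)
  finally show ?thesis .
qed

lemma feasible_axis:
  assumes "0 \<le> k"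
  shows "feasible k (axis i k) 0" and "feasible k 0 (axis i k)"
  using assms by (simp_all add: feasible_def axis_def)

lemma camp_gain_axis:
  shows "camp_gain s r c (axis i k) 0 = s $ i * c $ i * k"
    and "camp_gain s r c 0 (axis i k) = r $ i * c $ i * k"
  by (simp_all add: camp_gain_def axis_def if_distrib[of "times _"] cong: if_cong)

lemma opt_strategy_feasible_camp_gain:
  assumes "opt_strategy s r c k x1 x2" and "0 \<le> k"
  shows "feasible k x1 x2 \<and> camp_gain s r c x1 x2 = max (best_rate s r c) 0 * k"
proof -
  define A where "A = Max (range (\<lambda>i. s $ i * c $ i))"
  define B where "B = Max (range (\<lambda>i. r $ i * c $ i))"
  have M: "best_rate s r c = max A B"
    by (simp add: best_rate_def A_def B_def)
  have strategy: "(max A B \<le> 0 \<longrightarrow> x1 = 0 \<and> x2 = 0) \<and>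
    (0 < max A B \<longrightarrow>
      (B \<le> A \<and> (\<exists>i. s $ i * c $ i = A \<and> x1 = axis i k \<and> x2 = 0)) \<or>
      (A \<le> B \<and> (\<exists>j. r $ j * c $ j = B \<and> x1 = 0 \<and> x2 = axis j k)))"
    using assms(1) unfolding opt_strategy_def Let_def A_def B_def by blast
  show ?thesis
  proof (cases "max A B \<le> 0")
    case True
    then show ?thesis
      using strategy assms(2) by (simp add: M feasible_def camp_gain_def)
  next
    case False
    then show ?thesis
      using strategy assms(2) by (auto simp: M feasible_axis camp_gain_axis max_def)
  qed
qed

lemma camp_gain_le_opt_strategy:
  assumes "opt_strategy s r c k x1 x2" and "0 \<le> k" and "feasible k x1' x2'"
  shows "camp_gain s r c x1' x2' \<le> camp_gain s r c x1 x2"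
  using camp_gain_le_best_rate[OF assms(3)] opt_strategy_feasible_camp_gain[OF assms(1,2)] by simp

theorem mainTheorem1:
  fixes w :: "real^'n^'n"
    and w0 wg wb v0 :: "real^'n"
    and kg kb :: real
  assumes row: "\<And>i. (\<Sum>j\<in>UNIV. \<bar>w $ i $ j\<bar>) < 1"
    and tot: "\<And>i. \<bar>w0 $ i\<bar> + (\<Sum>j\<in>UNIV. \<bar>w $ i $ j\<bar>) + \<bar>wg $ i\<bar> + \<bar>wb $ i\<bar> \<le> 1"
    and kg: "0 \<le> kg" and kb: "0 \<le> kb"
  shows
    "(\<forall>x1 x2 y1 y2.
        utility w w0 wg wb v0 x1 x2 y1 y2 =
          (\<Sum>i\<in>UNIV. svec w w0 $ i * w0 $ i * v0 $ i)
        + (\<Sum>i\<in>UNIV. svec w w0 $ i * wg $ i * x1 $ i)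
        - (\<Sum>i\<in>UNIV. svec w w0 $ i * wb $ i * y1 $ i)
        + (\<Sum>i\<in>UNIV. rvec w $ i * wg $ i * x2 $ i)
        - (\<Sum>i\<in>UNIV. rvec w $ i * wb $ i * y2 $ i))
   \<and> (\<forall>x1 x2. opt_strategy (svec w w0) (rvec w) wg kg x1 x2 \<longrightarrow>
        feasible kg x1 x2 \<and>
        (\<forall>y1 y2 x1' x2'. feasible kb y1 y2 \<longrightarrow> feasible kg x1' x2' \<longrightarrow>
           utility w w0 wg wb v0 x1' x2' y1 y2 \<le> utility w w0 wg wb v0 x1 x2 y1 y2))
   \<and> (\<forall>y1 y2. opt_strategy (svec w w0) (rvec w) wb kb y1 y2 \<longrightarrow>
        feasible kb y1 y2 \<and>
        (\<forall>x1 x2 y1' y2'. feasible kg x1 x2 \<longrightarrow> feasible kb y1' y2' \<longrightarrow>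
           - utility w w0 wg wb v0 x1 x2 y1' y2' \<le> - utility w w0 wg wb v0 x1 x2 y1 y2))
   \<and> (\<forall>x1 x2 y1 y2. opt_strategy (svec w w0) (rvec w) wg kg x1 x2 \<longrightarrow>
        opt_strategy (svec w w0) (rvec w) wb kb y1 y2 \<longrightarrow>
        (\<forall>x1' x2'. feasible kg x1' x2' \<longrightarrow>
           utility w w0 wg wb v0 x1' x2' y1 y2 \<le> utility w w0 wg wb v0 x1 x2 y1 y2) \<and>
        (\<forall>y1' y2'. feasible kb y1' y2' \<longrightarrow>
           - utility w w0 wg wb v0 x1 x2 y1' y2' \<le> - utility w w0 wg wb v0 x1 x2 y1 y2))"
proof -
  have inv: "invertible (mat 1 - w)"
    using row by (rule invertible_mat_1_minus_row_sum_lt_1)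
  note utility = utility_eq_camp_gain[OF inv]
  let ?s = "svec w w0" and ?r = "rvec w"
  have good: "utility w w0 wg wb v0 x1' x2' y1 y2 \<le> utility w w0 wg wb v0 x1 x2 y1 y2"
    if "opt_strategy ?s ?r wg kg x1 x2" and "feasible kg x1' x2'" for x1 x2 x1' x2' y1 y2
    using camp_gain_le_opt_strategy[OF that(1) kg that(2)] by (simp add: utility)
  have bad: "utility w w0 wg wb v0 x1 x2 y1 y2 \<le> utility w w0 wg wb v0 x1 x2 y1' y2'"
    if "opt_strategy ?s ?r wb kb y1 y2" and "feasible kb y1' y2'" for x1 x2 y1 y2 y1' y2'
    using camp_gain_le_opt_strategy[OF that(1) kb that(2)] by (simp add: utility)
  have feasible: "feasible k x1 x2" if "opt_strategy ?s ?r c k x1 x2" and "0 \<le> k" for c k x1 x2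
    using opt_strategy_feasible_camp_gain[OF that] by blast
  show ?thesis
  proof (intro conjI allI impI, goal_cases)
    case (1 x1 x2 y1 y2)
    show ?case
      by (simp add: utility camp_gain_def)
  qed (simp_all add: good bad feasible[OF _ kg] feasible[OF _ kb])
qed

end
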